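(* Let $g:[a,b]\to\mathbb R$ be a derivator such that $g^C\equiv0$ and $D_g=\{x_n\}_{n\in\mathbb N}$ with $x_1=a$ and $x_n<x_{n+1}$ for every $n\in\mathbb N$. Then ${\rm P}_g$ is dense in $\mathrm{UC}_g([a,b])$ with respect to the supremum norm.
   Context: $\mathbb F\in\{\mathbb R,\mathbb C\}$. A derivator is a nondecreasing, left-continuous $g:[a,b]\to\mathbb R$; $\mu_g$ is its Lebesgue–Stieltjes measure ($\mu_g([c,d))=g(d)-g(c)$). For $x\in[a,b)$, $\Delta g(x)=g(x^+)-g(x)$; $D_g=\{x\in[a,b):\Delta g(x)>0\}$; $g^B(x)=\sum_{y\in[a,x)\cap D_g}\Delta g(y)$ and $g^C=g-g^B$. For $x_0\in[a,b]$, the $g$-monomials centered at $x_0$ are $g_{x_0,0}\equiv1$, $g_{x_0,n}(x)=n\int_{[x_0,x)}g_{x_0,n-1}\,d\mu_g$ for $x\ge x_0$, $g_{x_0,n}(x)=-n\int_{[x,x_0)}g_{x_0,n-1}\,d\mu_g$ for $x<x_0$. ${\rm P}_g$ is the space of finite $\mathbb F$-linear combinations of $g$-monomials. $\mathrm{UC}_g([a,b])$ is the Banach space (supremum norm) of uniformly $g$-continuous functions $f:[a,b]\to\mathbb F$: for every $\varepsilon>0$ there is $\delta>0$ with $|g(x)-g(y)|<\delta\Rightarrow|f(x)-f(y)|<\varepsilon$ for all $x,y\in[a,b]$. *)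

theory Defs
  imports "HOL-Analysis.Analysis"
begin

definition derivator :: "(real \<Rightarrow> real) \<Rightarrow> real \<Rightarrow> real \<Rightarrow> bool" where
  "derivator g a b \<longleftrightarrow> a < b \<and> mono_on {a..b} g \<and>
     (\<forall>x\<in>{a<..b}. (g \<longlongrightarrow> g x) (at_left x))"

definition gext :: "(real \<Rightarrow> real) \<Rightarrow> real \<Rightarrow> real \<Rightarrow> real \<Rightarrow> real" where
  "gext g a b x = g (max a (min b x))"

text \<open>Lebesgue-Stieltjes measure mu_g with mu_g([c,d)) = g(d) - g(c):
  the reflection of the (right-continuous) interval measure of x |-> - g(-x).\<close>
definition LS_measure :: "(real \<Rightarrow> real) \<Rightarrow> real \<Rightarrow> real \<Rightarrow> real measure" where
  "LS_measure g a b = distr (interval_measure (\<lambda>x. - gext g a b (- x))) borel uminus"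

definition gjump :: "(real \<Rightarrow> real) \<Rightarrow> real \<Rightarrow> real" where
  "gjump g x = Lim (at_right x) g - g x"

definition Dg :: "(real \<Rightarrow> real) \<Rightarrow> real \<Rightarrow> real \<Rightarrow> real set" where
  "Dg g a b = {x \<in> {a..<b}. gjump g x > 0}"

definition gB :: "(real \<Rightarrow> real) \<Rightarrow> real \<Rightarrow> real \<Rightarrow> real \<Rightarrow> real" where
  "gB g a b x = infsum (gjump g) ({a..<x} \<inter> Dg g a b)"

definition gC :: "(real \<Rightarrow> real) \<Rightarrow> real \<Rightarrow> real \<Rightarrow> real \<Rightarrow> real" where
  "gC g a b x = g x - gB g a b x"

primrec gmono :: "(real \<Rightarrow> real) \<Rightarrow> real \<Rightarrow> real \<Rightarrow> real \<Rightarrow> nat \<Rightarrow> real \<Rightarrow> real" where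
  "gmono g a b x0 0 = (\<lambda>x. 1)"
| "gmono g a b x0 (Suc n) = (\<lambda>x.
     if x0 \<le> x then real (Suc n) * (LINT y:{x0..<x}|LS_measure g a b. gmono g a b x0 n y)
     else - real (Suc n) * (LINT y:{x..<x0}|LS_measure g a b. gmono g a b x0 n y))"

definition Pg :: "(real \<Rightarrow> real) \<Rightarrow> real \<Rightarrow> real \<Rightarrow> (real \<Rightarrow> 'k::real_normed_field) set" where
  "Pg g a b = {p. \<exists>S c. finite S \<and> (\<forall>(x0, n)\<in>S. x0 \<in> {a..b}) \<and>
      (\<forall>x. p x = (\<Sum>(x0, n)\<in>S. c (x0, n) * of_real (gmono g a b x0 n x)))}"

definition UCg :: "(real \<Rightarrow> real) \<Rightarrow> real \<Rightarrow> real \<Rightarrow> (real \<Rightarrow> 'k::real_normed_vector) set" where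
  "UCg g a b = {f. \<forall>\<epsilon>>0. \<exists>\<delta>>0. \<forall>x\<in>{a..b}. \<forall>y\<in>{a..b}.
      \<bar>g x - g y\<bar> < \<delta> \<longrightarrow> norm (f x - f y) < \<epsilon>}"

definition Pg_dense :: "(real \<Rightarrow> real) \<Rightarrow> real \<Rightarrow> real \<Rightarrow> 'k::real_normed_field itself \<Rightarrow> bool" where
  "Pg_dense g a b _ \<longleftrightarrow> (\<forall>f::real \<Rightarrow> 'k. f \<in> UCg g a b \<longrightarrow>
      (\<forall>\<epsilon>>0. \<exists>p\<in>Pg g a b. (SUP x\<in>{a..b}. norm (f x - p x)) < \<epsilon>))"

end

theory Submission
  imports Defs "HOL-Probability.Distribution_Functions"
begin

text \<open>Since \<open>g\<close> has no continuous part, \<open>\<mu>\<^sub>g\<close> is the sum of the point masses \<open>d n\<close> at the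
  jump points \<open>xs n\<close>, where \<open>d n = \<Delta>g(xs n)\<close>. Hence the \<open>g\<close>-monomials centred at \<open>a\<close> are step
  functions: the \<open>k\<close>-th one equals \<open>k! e\<^sub>k(n)\<close> at \<open>xs n\<close>, where \<open>e\<^sub>k(n)\<close> is the \<open>k\<close>-th elementary
  symmetric polynomial of \<open>d 0, \<dots>, d (n - 1)\<close>; it is constant between consecutive jump points
  and takes the limit value on \<open>[sup xs, b]\<close>. A uniformly \<open>g\<close>-continuous \<open>f\<close> has the same shape,
  so it suffices to approximate the convergent sequence \<open>f (xs n)\<close>, uniformly in \<open>n\<close>, by linear
  combinations of the sequences \<open>e\<^sub>k\<close>.

  As \<open>e\<^sub>k(n) \<le> (\<Sum>d)^k / k!\<close>, every Taylor coefficient of \<open>\<Sum>\<^sub>k e\<^sub>k(n) t^k = (\<Prod>j<n. 1 + t d j)\<close>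
  at a fixed point is a uniform limit of such combinations. At \<open>t = -1 / d m\<close>, the coefficient
  whose order is the number of \<open>j < m\<close> with \<open>d j = d m\<close> vanishes for \<open>n > m\<close> but not for \<open>n = m\<close>;
  by induction on \<open>m\<close> this yields the indicator sequence of every \<open>m\<close>, and together with the
  constants all convergent sequences.\<close>

section \<open>Elementary symmetric polynomials of a sequence\<close>

text \<open>\<open>esym d k n\<close> is the \<open>k\<close>-th elementary symmetric polynomial of \<open>d 0, \<dots>, d (n - 1)\<close>,
  expanded along its largest index.\<close>
fun esym :: "(nat \<Rightarrow> real) \<Rightarrow> nat \<Rightarrow> nat \<Rightarrow> real" where
  "esym d 0 n = 1"
| "esym d (Suc k) n = (\<Sum>j<n. d j * esym d k j)"

lemma esym_Suc_right:
  "esym d k (Suc n) = esym d k n + (if k = 0 then 0 else d n * esym d (k - 1) n)"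
  by (cases k) auto

lemma esym_eq_0: "n < k \<Longrightarrow> esym d k n = 0"
  by (induction k arbitrary: n) auto

lemma esym_nonneg: "(\<And>j. 0 \<le> d j) \<Longrightarrow> 0 \<le> esym d k n"
  by (induction k arbitrary: n) (auto intro!: sum_nonneg)

lemma power_Suc_add_ge:
  fixes t e :: real
  assumes "0 \<le> t" "0 \<le> e"
  shows "t ^ Suc k + real (Suc k) * e * t ^ k \<le> (t + e) ^ Suc k"
proof (induction k)
  case (Suc k)
  have "t ^ Suc (Suc k) + real (Suc (Suc k)) * e * t ^ Suc k
      \<le> (t + e) * (t ^ Suc k + real (Suc k) * e * t ^ k)"
    using assms by (simp add: algebra_simps)
  also have "\<dots> \<le> (t + e) * (t + e) ^ Suc k"
    using Suc assms by (intro mult_left_mono) auto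
  finally show ?case by simp
qed simp

lemma esym_le:
  assumes d_nonneg: "\<And>j. 0 \<le> d j"
  shows "esym d k n \<le> (\<Sum>j<n. d j) ^ k / fact k"
proof (induction n arbitrary: k)
  case 0
  show ?case by (cases k) auto
next
  case (Suc n)
  show ?case
  proof (cases k)
    case (Suc k')
    define t where "t = (\<Sum>j<n. d j)"
    have t: "0 \<le> t" unfolding t_def by (simp add: d_nonneg sum_nonneg)
    have "esym d k (Suc n) = esym d (Suc k') n + d n * esym d k' n"
      using Suc by simp
    also have "\<dots> \<le> t ^ Suc k' / fact (Suc k') + d n * (t ^ k' / fact k')"
      using Suc.IH[of "Suc k'"] Suc.IH[of k'] d_nonneg unfolding t_def
      by (intro add_mono mult_left_mono) auto
    also have "\<dots> = (t ^ Suc k' + real (Suc k') * d n * t ^ k') / fact (Suc k')"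
      by (simp add: field_simps del: fact_Suc) (simp add: algebra_simps)
    also have "\<dots> \<le> (t + d n) ^ Suc k' / fact (Suc k')"
      using power_Suc_add_ge[OF t d_nonneg] by (intro divide_right_mono) auto
    finally show ?thesis using Suc by (simp add: t_def add.commute)
  qed simp
qed

text \<open>Since \<open>\<Sum>k. esym d k n * t ^ k = (\<Prod>j<n. 1 + t * d j)\<close>, \<open>esym_taylor d r l n\<close> is the
  \<open>r\<close>-th Taylor coefficient of this polynomial at \<open>t = l\<close>.\<close>
definition esym_taylor :: "(nat \<Rightarrow> real) \<Rightarrow> nat \<Rightarrow> real \<Rightarrow> nat \<Rightarrow> real" where
  "esym_taylor d r l n = (\<Sum>k\<le>n. real (k choose r) * l ^ (k - r) * esym d k n)"

lemma choose_mult_power_Suc: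
  "real (Suc j choose r) * l ^ (Suc j - r) =
     l * (real (j choose r) * l ^ (j - r)) +
     (if r = 0 then 0 else real (j choose (r - 1)) * l ^ (j - (r - 1)))"
proof (cases r)
  case (Suc r')
  consider "Suc r' \<le> j" | "j = r'" | "j < r'" by linarith
  then show ?thesis
  proof cases
    case 1
    then have "j - r' = Suc (j - Suc r')" by simp
    then show ?thesis using Suc 1 by (simp add: algebra_simps)
  qed (use Suc in \<open>auto simp: binomial_eq_0\<close>)
qed simp

lemma esym_taylor_0_right: "esym_taylor d r l 0 = (if r = 0 then 1 else 0)"
  by (simp add: esym_taylor_def)

lemma esym_taylor_Suc_right:
  "esym_taylor d r l (Suc n) =
     (1 + l * d n) * esym_taylor d r l n + (if r = 0 then 0 else d n * esym_taylor d (r - 1) l n)"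
proof -
  let ?c = "\<lambda>k. real (k choose r) * l ^ (k - r)"
  have "esym_taylor d r l (Suc n) =
      (\<Sum>k\<le>Suc n. ?c k * esym d k n) + (\<Sum>k\<le>Suc n. ?c k * (if k = 0 then 0 else d n * esym d (k - 1) n))"
    unfolding esym_taylor_def esym_Suc_right by (simp add: distrib_left sum.distrib)
  also have "(\<Sum>k\<le>Suc n. ?c k * esym d k n) = esym_taylor d r l n"
    by (simp add: esym_taylor_def esym_eq_0)
  also have "(\<Sum>k\<le>Suc n. ?c k * (if k = 0 then 0 else d n * esym d (k - 1) n))
      = (\<Sum>j\<le>n. d n * (l * (real (j choose r) * l ^ (j - r)) * esym d j n)
          + (if r = 0 then 0 else d n * (real (j choose (r - 1)) * l ^ (j - (r - 1)) * esym d j n)))"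
    unfolding sum.atMost_Suc_shift choose_mult_power_Suc by (auto intro!: sum.cong simp: algebra_simps)
  also have "\<dots> = d n * l * esym_taylor d r l n + (if r = 0 then 0 else d n * esym_taylor d (r - 1) l n)"
    unfolding esym_taylor_def by (auto simp: sum.distrib sum_distrib_left algebra_simps)
  finally show ?thesis by (simp add: algebra_simps)
qed

definition occurrences :: "(nat \<Rightarrow> real) \<Rightarrow> real \<Rightarrow> nat \<Rightarrow> nat" where
  "occurrences d c n = card {j. j < n \<and> d j = c}"

lemma occurrences_0_right [simp]: "occurrences d c 0 = 0"
  by (simp add: occurrences_def)

lemma occurrences_Suc_right:
  "occurrences d c (Suc n) = occurrences d c n + (if d n = c then 1 else 0)"
proof -
  have "{j. j < Suc n \<and> d j = c} = (if d n = c then insert n else id) {j. j < n \<and> d j = c}"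
    by (auto simp: less_Suc_eq)
  then show ?thesis by (simp add: occurrences_def)
qed

lemma occurrences_strict_mono: "m < n \<Longrightarrow> d m = c \<Longrightarrow> occurrences d c m < occurrences d c n"
  unfolding occurrences_def by (rule psubset_card_mono) auto

lemma esym_taylor_root_vanishes:
  assumes "c \<noteq> 0" and "r < occurrences d c n"
  shows "esym_taylor d r (- 1 / c) n = 0"
  using assms(2)
proof (induction n arbitrary: r)
  case (Suc n)
  show ?case
  proof (cases "d n = c")
    case True
    then have "1 + (- 1 / c) * d n = 0" using assms(1) by simp
    moreover have "r = 0 \<or> r - 1 < occurrences d c n"
      using Suc.prems True by (auto simp: occurrences_Suc_right)
    ultimately show ?thesis using Suc.IH by (auto simp: esym_taylor_Suc_right)
  next
    case False
    then have "r < occurrences d c n" using Suc.prems by (simp add: occurrences_Suc_right)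
    then show ?thesis using Suc.IH[of r] Suc.IH[of "r - 1"] by (simp add: esym_taylor_Suc_right)
  qed
qed simp

lemma esym_taylor_root_nonzero:
  assumes "c \<noteq> 0"
  shows "esym_taylor d (occurrences d c n) (- 1 / c) n \<noteq> 0"
proof (induction n)
  case (Suc n)
  show ?case
  proof (cases "d n = c")
    case True
    then show ?thesis using Suc.IH assms by (simp add: esym_taylor_Suc_right occurrences_Suc_right)
  next
    case False
    then have "1 + (- 1 / c) * d n \<noteq> 0" using assms by (auto simp: field_simps)
    moreover have "occurrences d c n = 0 \<or> esym_taylor d (occurrences d c n - 1) (- 1 / c) n = 0"
      using esym_taylor_root_vanishes[OF assms, of "occurrences d c n - 1" d n] by linarith
    ultimately show ?thesis using Suc.IH False by (auto simp: esym_taylor_Suc_right occurrences_Suc_right)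
  qed
qed (simp add: esym_taylor_0_right)

section \<open>Uniform approximation of sequences\<close>

definition uniformly_approximable :: "(nat \<Rightarrow> 'a \<Rightarrow> real) \<Rightarrow> ('a \<Rightarrow> 'k::real_normed_field) \<Rightarrow> bool" where
  "uniformly_approximable Q v \<longleftrightarrow>
     (\<forall>\<epsilon>>0. \<exists>K c. \<forall>x. norm (v x - (\<Sum>k<K. c k * of_real (Q k x))) \<le> \<epsilon>)"

lemma uniformly_approximable_basis: "uniformly_approximable Q (\<lambda>x. of_real (Q k x))"
  unfolding uniformly_approximable_def
  by (auto intro!: exI[of _ "Suc k"] exI[of _ "\<lambda>i. if i = k then 1 else 0"] simp: if_distrib cong: if_cong)

lemma uniformly_approximable_limit:
  assumes "\<And>\<epsilon>. \<epsilon> > 0 \<Longrightarrow> \<exists>w. uniformly_approximable Q w \<and> (\<forall>x. norm (v x - w x) \<le> \<epsilon>)"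
  shows "uniformly_approximable Q v"
  unfolding uniformly_approximable_def
proof (intro allI impI)
  fix \<epsilon> :: real
  assume "\<epsilon> > 0"
  then obtain w where w: "uniformly_approximable Q w" "\<And>x. norm (v x - w x) \<le> \<epsilon> / 2"
    using assms[of "\<epsilon> / 2"] by auto
  then obtain K c where "\<And>x. norm (w x - (\<Sum>k<K. c k * of_real (Q k x))) \<le> \<epsilon> / 2"
    using \<open>\<epsilon> > 0\<close> unfolding uniformly_approximable_def by (meson half_gt_zero)
  then have "norm (v x - (\<Sum>k<K. c k * of_real (Q k x))) \<le> \<epsilon>" for x
    using norm_diff_triangle_le[OF w(2)] by fastforce
  then show "\<exists>K c. \<forall>x. norm (v x - (\<Sum>k<K. c k * of_real (Q k x))) \<le> \<epsilon>" by blast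
qed

lemma uniformly_approximable_add:
  fixes v w :: "'a \<Rightarrow> 'k::real_normed_field"
  assumes "uniformly_approximable Q v" "uniformly_approximable Q w"
  shows "uniformly_approximable Q (\<lambda>x. v x + w x)"
  unfolding uniformly_approximable_def
proof (intro allI impI)
  fix \<epsilon> :: real
  assume "\<epsilon> > 0"
  then have "\<epsilon> / 2 > 0" by simp
  then obtain K1 c1 K2 c2
    where 1: "\<And>x. norm (v x - (\<Sum>k<K1. c1 k * of_real (Q k x))) \<le> \<epsilon> / 2"
      and 2: "\<And>x. norm (w x - (\<Sum>k<K2. c2 k * of_real (Q k x))) \<le> \<epsilon> / 2"
    using assms unfolding uniformly_approximable_def by blast
  define K where "K = max K1 K2"
  define c where "c k = (if k < K1 then c1 k else 0) + (if k < K2 then c2 k else 0)" for k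
  have truncate: "(\<Sum>k<K. (if k < K' then f k else 0)) = (\<Sum>k<K'. f k)" if "K' \<le> K" for K' and f :: "nat \<Rightarrow> 'k"
    using that by (intro sum.mono_neutral_cong_right) auto
  have split: "v x + w x - (\<Sum>k<K. c k * of_real (Q k x)) =
      (v x - (\<Sum>k<K1. c1 k * of_real (Q k x))) + (w x - (\<Sum>k<K2. c2 k * of_real (Q k x)))" for x
    using truncate[of K1 "\<lambda>k. c1 k * of_real (Q k x)"] truncate[of K2 "\<lambda>k. c2 k * of_real (Q k x)"]
    unfolding c_def distrib_right sum.distrib if_distrib[of "\<lambda>a. a * _"] mult_zero_left
    by (simp add: K_def)
  have "norm (v x + w x - (\<Sum>k<K. c k * of_real (Q k x))) \<le> \<epsilon>" for x
    unfolding split using norm_triangle_le[OF add_mono[OF 1 2], of x x] by simp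
  then show "\<exists>K c. \<forall>x. norm (v x + w x - (\<Sum>k<K. c k * of_real (Q k x))) \<le> \<epsilon>" by blast
qed

lemma uniformly_approximable_scale:
  assumes "uniformly_approximable Q v"
  shows "uniformly_approximable Q (\<lambda>x. \<alpha> * v x)"
  unfolding uniformly_approximable_def
proof (intro allI impI)
  fix \<epsilon> :: real
  assume "\<epsilon> > 0"
  moreover have norm_\<alpha>: "norm \<alpha> + 1 > 0"
    by (simp add: add_nonneg_pos)
  ultimately have "\<epsilon> / (norm \<alpha> + 1) > 0" by simp
  then obtain K c where approx: "\<And>x. norm (v x - (\<Sum>k<K. c k * of_real (Q k x))) \<le> \<epsilon> / (norm \<alpha> + 1)"
    using assms unfolding uniformly_approximable_def by blast
  have "norm (\<alpha> * v x - (\<Sum>k<K. (\<alpha> * c k) * of_real (Q k x))) \<le> \<epsilon>" for x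
  proof -
    have "norm (\<alpha> * v x - (\<Sum>k<K. (\<alpha> * c k) * of_real (Q k x)))
        = norm \<alpha> * norm (v x - (\<Sum>k<K. c k * of_real (Q k x)))"
      by (simp add: sum_distrib_left right_diff_distrib mult.assoc flip: norm_mult)
    also have "\<dots> \<le> (norm \<alpha> + 1) * (\<epsilon> / (norm \<alpha> + 1))"
      using approx[of x] by (intro mult_mono) auto
    finally show ?thesis using norm_\<alpha> by simp
  qed
  then show "\<exists>K c. \<forall>x. norm (\<alpha> * v x - (\<Sum>k<K. c k * of_real (Q k x))) \<le> \<epsilon>"
    by (intro exI[of _ K] exI[of _ "\<lambda>k. \<alpha> * c k"]) simp
qed

lemma uniformly_approximable_sum:
  "(\<And>i. i \<in> I \<Longrightarrow> uniformly_approximable Q (w i)) \<Longrightarrow> uniformly_approximable Q (\<lambda>x. \<Sum>i\<in>I. w i x)"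
proof (induction I rule: infinite_finite_induct)
  case (infinite I)
  then show ?case by (auto simp: uniformly_approximable_def intro!: exI[of _ 0])
next
  case empty
  then show ?case by (auto simp: uniformly_approximable_def intro!: exI[of _ 0])
next
  case (insert i I)
  then show ?case by (simp add: uniformly_approximable_add)
qed

lemma uniformly_approximable_suminf:
  fixes c :: "nat \<Rightarrow> real"
  assumes bound: "\<And>k x. \<bar>c k * Q k x\<bar> \<le> B k" and "summable B"
  shows "uniformly_approximable Q (\<lambda>x. of_real (\<Sum>k. c k * Q k x) :: 'k::real_normed_field)"
  unfolding uniformly_approximable_def
proof (intro allI impI)
  fix \<epsilon> :: real
  assume "\<epsilon> > 0"
  then obtain N where tail: "norm (\<Sum>i. B (i + N)) < \<epsilon>"
    using suminf_exist_split[OF _ \<open>summable B\<close>] by blast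
  have "\<bar>(\<Sum>k. c k * Q k x) - (\<Sum>k<N. c k * Q k x)\<bar> \<le> \<epsilon>" for x
  proof -
    have abs_summable: "summable (\<lambda>k. \<bar>c k * Q k x\<bar>)"
      using bound by (intro summable_comparison_test'[OF \<open>summable B\<close>]) auto
    have "\<bar>(\<Sum>k. c k * Q k x) - (\<Sum>k<N. c k * Q k x)\<bar> = \<bar>\<Sum>i. c (i + N) * Q (i + N) x\<bar>"
      using suminf_split_initial_segment[OF summable_rabs_cancel[OF abs_summable], of N] by simp
    also have "\<dots> \<le> (\<Sum>i. B (i + N))"
      using abs_summable bound \<open>summable B\<close>
      by (intro order_trans[OF summable_rabs suminf_le])
        (auto simp: summable_iff_shift[where f = "\<lambda>k. \<bar>c k * Q k x\<bar>"] summable_iff_shift[where f = B])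
    finally show ?thesis using tail by simp
  qed
  then have "norm (of_real (\<Sum>k. c k * Q k x) - (\<Sum>k<N. of_real (c k) * of_real (Q k x)) :: 'k) \<le> \<epsilon>" for x
    by (simp flip: of_real_mult of_real_sum of_real_diff)
  then show "\<exists>K c'. \<forall>x. norm (of_real (\<Sum>k. c k * Q k x) - (\<Sum>k<K. c' k * of_real (Q k x)) :: 'k) \<le> \<epsilon>"
    by (intro exI[of _ N] exI[of _ "\<lambda>k. of_real (c k)"]) simp
qed

context
  fixes d :: "nat \<Rightarrow> real"
  assumes d_pos: "\<And>j. 0 < d j" and summable_d: "summable d"
begin

lemma esym_le_suminf: "esym d k n \<le> suminf d ^ k / fact k"
proof -
  have "esym d k n \<le> (\<Sum>j<n. d j) ^ k / fact k"
    using d_pos by (intro esym_le less_imp_le)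
  also have "\<dots> \<le> suminf d ^ k / fact k"
    using d_pos summable_d
    by (intro divide_right_mono power_mono sum_le_suminf sum_nonneg) (auto intro: less_imp_le)
  finally show ?thesis .
qed

lemma abs_choose_power_esym_le:
  "\<bar>real (k choose r) * l ^ (k - r) * esym d k n\<bar> \<le> (2 * max 1 \<bar>l\<bar> * suminf d) ^ k / fact k"
proof -
  define M where "M = max 1 \<bar>l\<bar>"
  have "real (k choose r) \<le> 2 ^ k"
    using binomial_le_pow2[of k r] by (metis of_nat_le_iff of_nat_numeral of_nat_power)
  moreover have "\<bar>l\<bar> ^ (k - r) \<le> M ^ k"
    using power_mono[of "\<bar>l\<bar>" M "k - r"] power_increasing[of "k - r" k M] by (simp add: M_def)
  moreover have "\<bar>esym d k n\<bar> \<le> suminf d ^ k / fact k"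
    using esym_le_suminf esym_nonneg d_pos less_imp_le by (metis abs_of_nonneg)
  ultimately have "\<bar>real (k choose r) * l ^ (k - r) * esym d k n\<bar> \<le> 2 ^ k * M ^ k * (suminf d ^ k / fact k)"
    unfolding abs_mult power_abs by (intro mult_mono) (auto simp: M_def)
  then show ?thesis by (simp add: M_def power_mult_distrib)
qed

lemma uniformly_approximable_esym_taylor:
  "uniformly_approximable (esym d) (\<lambda>n. of_real (esym_taylor d r l n) :: 'k::real_normed_field)"
proof -
  have "esym_taylor d r l n = (\<Sum>k. real (k choose r) * l ^ (k - r) * esym d k n)" for n
    unfolding esym_taylor_def by (rule suminf_finite[symmetric]) (auto simp: esym_eq_0)
  moreover have "summable (\<lambda>k. (2 * max 1 \<bar>l\<bar> * suminf d) ^ k / fact k)"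
    using summable_exp[of "2 * max 1 \<bar>l\<bar> * suminf d"] by (simp add: divide_inverse mult.commute)
  ultimately show ?thesis
    using uniformly_approximable_suminf[OF abs_choose_power_esym_le] by simp
qed

lemma uniformly_approximable_esym_indicator:
  "uniformly_approximable (esym d) (\<lambda>n. if n = m then 1 else 0 :: 'k::real_normed_field)"
proof (induction m rule: less_induct)
  case (less m)
  have "d m \<noteq> 0" using d_pos[of m] by simp
  define v where "v n = (of_real (esym_taylor d (occurrences d (d m) m) (- 1 / d m) n) :: 'k)" for n
  have v_approx: "uniformly_approximable (esym d) v"
    unfolding v_def by (rule uniformly_approximable_esym_taylor)
  have v_vanishes: "v n = 0" if "m < n" for n
    unfolding v_def using esym_taylor_root_vanishes[OF \<open>d m \<noteq> 0\<close>] occurrences_strict_mono[OF that] by simp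
  have v_nonzero: "v m \<noteq> 0"
    unfolding v_def using esym_taylor_root_nonzero[OF \<open>d m \<noteq> 0\<close>] by simp
  define w where "w n = (1 / v m) * (v n + (- 1) * (\<Sum>i<m. v i * (if n = i then 1 else 0)))" for n
  have "uniformly_approximable (esym d) w"
    unfolding w_def
    by (intro uniformly_approximable_scale uniformly_approximable_add v_approx
        uniformly_approximable_sum less.IH) auto
  moreover have "w = (\<lambda>n. if n = m then 1 else 0)"
  proof
    fix n
    consider "n < m" | "n = m" | "m < n" by linarith
    then show "w n = (if n = m then 1 else 0)"
      by cases (auto simp: w_def v_nonzero v_vanishes if_distrib[of "\<lambda>x. v _ * x"] cong: if_cong)
  qed
  ultimately show ?case by simp
qed

lemma uniformly_approximable_esym_convergent:
  fixes v :: "nat \<Rightarrow> 'k::real_normed_field"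
  assumes "v \<longlonglongrightarrow> L"
  shows "uniformly_approximable (esym d) v"
proof (rule uniformly_approximable_limit)
  fix \<epsilon> :: real
  assume "\<epsilon> > 0"
  then obtain N where N: "\<And>n. n \<ge> N \<Longrightarrow> norm (v n - L) < \<epsilon>"
    using LIMSEQ_D[OF assms] by blast
  define w where "w n = L * of_real (esym d 0 n) + (\<Sum>i<N. (v i - L) * (if n = i then 1 else 0))" for n
  have "uniformly_approximable (esym d) w"
    unfolding w_def
    by (intro uniformly_approximable_add uniformly_approximable_scale uniformly_approximable_basis
        uniformly_approximable_sum uniformly_approximable_esym_indicator)
  moreover have "norm (v n - w n) \<le> \<epsilon>" for n
    using N[of n] \<open>\<epsilon> > 0\<close> by (cases "n < N") (auto simp: w_def if_distrib[of "\<lambda>x. _ * x"] cong: if_cong)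
  ultimately show "\<exists>w. uniformly_approximable (esym d) w \<and> (\<forall>n. norm (v n - w n) \<le> \<epsilon>)"
    by blast
qed

end

section \<open>Weighted sums of point masses\<close>

definition point_masses :: "(nat \<Rightarrow> real) \<Rightarrow> (nat \<Rightarrow> real) \<Rightarrow> real measure" where
  "point_masses w s = distr (density (count_space UNIV) (\<lambda>n. ennreal (w n))) borel s"

lemma sets_point_masses [simp]: "sets (point_masses w s) = sets borel"
  by (simp add: point_masses_def)

lemma space_point_masses [simp]: "space (point_masses w s) = UNIV"
  by (simp add: point_masses_def)

lemma distr_point_masses:
  "f \<in> borel_measurable borel \<Longrightarrow> distr (point_masses w s) borel f = point_masses w (f \<circ> s)"
  unfolding point_masses_def by (rule distr_distr) auto

context
  fixes w :: "nat \<Rightarrow> real"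
  assumes w_nonneg: "\<And>n. 0 \<le> w n" and summable_w: "summable w"
begin

lemma summable_weights_if: "summable (\<lambda>n. if P n then w n else 0)"
  by (rule summable_comparison_test'[OF summable_w]) (auto simp: w_nonneg)

lemma emeasure_point_masses:
  assumes "A \<in> sets borel"
  shows "emeasure (point_masses w s) A = ennreal (\<Sum>n. if s n \<in> A then w n else 0)"
proof -
  have "emeasure (point_masses w s) A =
      (\<integral>\<^sup>+ n. ennreal (w n) * indicator (s -` A) n \<partial>count_space UNIV)"
    unfolding point_masses_def using assms
    by (simp add: emeasure_distr emeasure_density)
  also have "\<dots> = (\<Sum>n. ennreal (if s n \<in> A then w n else 0))"
    by (subst nn_integral_count_space_nat) (auto intro!: suminf_cong simp: indicator_def)
  also have "\<dots> = ennreal (\<Sum>n. if s n \<in> A then w n else 0)"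
    by (rule suminf_ennreal2) (auto simp: w_nonneg summable_weights_if)
  finally show ?thesis .
qed

lemma finite_borel_measure_point_masses: "finite_borel_measure (point_masses w s)"
proof -
  have "finite_measure (point_masses w s)"
    by (rule finite_measureI) (simp add: emeasure_point_masses)
  moreover have "sets (point_masses w s) = sets borel" by simp
  ultimately show ?thesis
    by (simp add: finite_borel_measure_def finite_borel_measure_axioms_def)
qed

lemma cdf_point_masses: "cdf (point_masses w s) x = (\<Sum>n. if s n \<le> x then w n else 0)"
proof -
  have "0 \<le> (\<Sum>n. if s n \<le> x then w n else 0)"
    by (intro suminf_nonneg summable_weights_if) (simp add: w_nonneg)
  then show ?thesis
    by (simp add: cdf_def measure_def emeasure_point_masses)
qed

lemma set_integral_point_masses:
  assumes "h \<in> borel_measurable borel" and "\<And>n. \<bar>h (s n)\<bar> \<le> B" and "A \<in> sets borel"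
  shows "(LINT y:A|point_masses w s. h y) = (\<Sum>n. w n * (indicator A (s n) * h (s n)))"
proof -
  have summable: "summable (\<lambda>n. norm (w n * (indicator A (s n) * h (s n))))"
  proof (rule summable_comparison_test'[OF summable_mult2[OF summable_w, of B]])
    fix n
    have "\<bar>indicator A (s n) * h (s n)\<bar> \<le> B"
      using assms(2)[of n] by (auto simp: indicator_def)
    then show "norm (norm (w n * (indicator A (s n) * h (s n)))) \<le> w n * B"
      using w_nonneg[of n] by (simp add: abs_mult mult_left_mono)
  qed
  have "(LINT y:A|point_masses w s. h y) =
      (LINT n|count_space UNIV. w n *\<^sub>R (indicator A (s n) *\<^sub>R h (s n)))"
    unfolding set_lebesgue_integral_def point_masses_def using assms(1,3)
    by (simp add: integral_distr integral_density w_nonneg)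
  also have "\<dots> = (\<Sum>n. w n * (indicator A (s n) * h (s n)))"
    using summable by (subst integral_count_space_nat) (auto simp: integrable_count_space_nat_iff)
  finally show ?thesis .
qed

end

lemma interval_measure_eq_cdf_shift:
  assumes M: "finite_borel_measure M" and F: "\<And>x. F x = cdf M x + c"
  shows "interval_measure F = M"
proof -
  interpret finite_borel_measure M by (fact M)
  have "interval_measure F = interval_measure (cdf M)"
    unfolding interval_measure_def F by simp
  also have "\<dots> = M"
  proof (rule cdf_unique'[OF _ M])
    have mono: "\<And>x y. x \<le> y \<Longrightarrow> cdf M x \<le> cdf M y"
      by (simp add: cdf_nondecreasing)
    show "finite_borel_measure (interval_measure (cdf M))"
      using cdf_is_right_cont cdf_lim_at_bot cdf_lim_at_top
      by (intro finite_borel_measure_interval_measure[OF mono]) auto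
    show "cdf (interval_measure (cdf M)) = cdf M"
      using cdf_is_right_cont cdf_lim_at_bot by (intro cdf_interval_measure[OF mono]) auto
  qed
  finally show ?thesis .
qed

section \<open>Purely discontinuous derivators\<close>

lemma UCg_eq_if_g_eq:
  assumes "f \<in> UCg g a b" "x \<in> {a..b}" "y \<in> {a..b}" "g x = g y"
  shows "f x = f y"
proof (rule ccontr)
  assume "f x \<noteq> f y"
  then have "norm (f x - f y) > 0" by simp
  then obtain \<delta> where "\<delta> > 0"
    and "\<forall>u\<in>{a..b}. \<forall>v\<in>{a..b}. \<bar>g u - g v\<bar> < \<delta> \<longrightarrow> norm (f u - f v) < norm (f x - f y)"
    using assms(1) unfolding UCg_def by blast
  then show False using assms(2-4) by fastforce
qed

lemma UCg_tendsto:
  assumes "f \<in> UCg g a b" and "(\<lambda>n. g (s n)) \<longlonglongrightarrow> g y" and "\<And>n. s n \<in> {a..b}" and "y \<in> {a..b}"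
  shows "(\<lambda>n. f (s n)) \<longlonglongrightarrow> f y"
proof (rule tendstoI)
  fix e :: real
  assume "e > 0"
  then obtain \<delta> where "\<delta> > 0" and \<delta>: "\<forall>u\<in>{a..b}. \<forall>v\<in>{a..b}. \<bar>g u - g v\<bar> < \<delta> \<longrightarrow> norm (f u - f v) < e"
    using assms(1) unfolding UCg_def by blast
  show "\<forall>\<^sub>F n in sequentially. dist (f (s n)) (f y) < e"
    using tendstoD[OF assms(2) \<open>\<delta> > 0\<close>]
    by eventually_elim (use \<delta> assms(3,4) in \<open>auto simp: dist_real_def dist_norm\<close>)
qed

lemma gmono_combination_in_Pg:
  assumes "x0 \<in> {a..b}"
  shows "(\<lambda>x. \<Sum>k<K. c k * of_real (gmono g a b x0 k x)) \<in> Pg g a b"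
  unfolding Pg_def
proof (intro CollectI exI conjI allI)
  show "finite (Pair x0 ` {..<K})" and "\<forall>(y, n)\<in>Pair x0 ` {..<K}. y \<in> {a..b}"
    using assms by auto
  show "(\<Sum>k<K. c k * of_real (gmono g a b x0 k x)) =
      (\<Sum>(y, n)\<in>Pair x0 ` {..<K}. (c \<circ> snd) (y, n) * of_real (gmono g a b y n x))" for x
    by (subst sum.reindex) (auto simp: inj_on_def)
qed

lemma incseq_less_cases:
  fixes s :: "nat \<Rightarrow> 'a::linorder"
  assumes "incseq s"
  shows "(\<exists>n. \<forall>j. s j < x \<longleftrightarrow> j < n) \<or> (\<forall>j. s j < x)"
proof (cases "\<exists>n. x \<le> s n")
  case True
  define n where "n = (LEAST n. x \<le> s n)"
  have "s j < x \<longleftrightarrow> j < n" for j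
    using LeastI_ex[OF True] not_less_Least[of j "\<lambda>n. x \<le> s n"] incseqD[OF assms, of n j]
    unfolding n_def[symmetric] by (meson not_le order.trans)
  then show ?thesis by blast
qed (auto simp: not_le)

locale pure_jump_derivator =
  fixes g :: "real \<Rightarrow> real" and a b :: real and xs :: "nat \<Rightarrow> real"
  assumes derivator: "derivator g a b"
    and continuous_part_zero: "\<forall>x\<in>{a..b}. gC g a b x = 0"
    and jump_points: "Dg g a b = range xs"
    and xs_increasing: "\<forall>n. xs n < xs (Suc n)"
begin

definition jump :: "nat \<Rightarrow> real" where
  "jump n = gjump g (xs n)"

lemma a_less_b: "a < b"
  and g_left_continuous: "x \<in> {a<..b} \<Longrightarrow> (g \<longlongrightarrow> g x) (at_left x)"
  using derivator unfolding derivator_def by auto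

lemma strict_mono_xs: "strict_mono xs"
  using xs_increasing by (simp add: strict_mono_Suc_iff)

lemma xs_less_iff [simp]: "xs i < xs j \<longleftrightarrow> i < j"
  using strict_mono_xs by (simp add: strict_mono_less)

lemma xs_ge: "a \<le> xs n" and xs_less: "xs n < b" and jump_pos: "0 < jump n"
  using jump_points unfolding Dg_def jump_def by (auto simp: set_eq_iff)

lemma xs_less_cases: "(\<exists>n. \<forall>j. xs j < x \<longleftrightarrow> j < n) \<or> (\<forall>j. xs j < x)"
  using incseq_less_cases[OF strict_mono_mono[OF strict_mono_xs]] .

lemma g_eq_infsum: "x \<in> {a..b} \<Longrightarrow> g x = infsum (gjump g) ({a..<x} \<inter> range xs)"
  using continuous_part_zero jump_points unfolding gC_def gB_def by auto

lemma g_eq_if_same_jumps_below: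
  assumes "x \<in> {a..b}" "y \<in> {a..b}" "\<And>j. xs j < x \<longleftrightarrow> xs j < y"
  shows "g x = g y"
proof -
  have "{a..<x} \<inter> range xs = {a..<y} \<inter> range xs"
    using assms(3) xs_ge by auto
  then show ?thesis using g_eq_infsum assms(1,2) by metis
qed

lemma g_xs: "g (xs n) = (\<Sum>j<n. jump j)"
proof -
  have "{a..<xs n} \<inter> range xs = xs ` {..<n}"
    using xs_ge by auto
  then have "g (xs n) = sum (gjump g) (xs ` {..<n})"
    using g_eq_infsum[of "xs n"] xs_ge[of n] xs_less[of n] by simp
  also have "\<dots> = (\<Sum>j<n. jump j)"
    using strict_mono_imp_inj_on[OF strict_mono_xs] by (subst sum.reindex) (auto simp: jump_def inj_on_subset)
  finally show ?thesis .
qed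

lemma jump_sums: "jump sums g b"
proof -
  define L where "L = (SUP n. xs n)"
  have bdd: "bdd_above (range xs)"
    using xs_less by (auto intro!: bdd_aboveI[of _ b] less_imp_le)
  have xs_less_L: "xs n < L" for n
    using cSUP_upper[OF UNIV_I bdd, of "Suc n"] xs_less_iff[of n "Suc n"] unfolding L_def by linarith
  have "L \<le> b"
    unfolding L_def using xs_less by (intro cSUP_least) (auto simp: less_imp_le)
  then have L: "L \<in> {a<..b}"
    using xs_less_L[of 0] xs_ge[of 0] by simp
  have "xs \<longlonglongrightarrow> L"
    unfolding L_def using bdd strict_mono_xs by (intro LIMSEQ_incseq_SUP) (auto simp: strict_mono_mono)
  then have "filterlim xs (at_left L) sequentially"
    using xs_less_L by (intro tendsto_imp_filterlim_at_left) auto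
  then have "(\<lambda>n. g (xs n)) \<longlonglongrightarrow> g L"
    using g_left_continuous[OF L] by (rule filterlim_compose[rotated])
  moreover have "g L = g b"
    using L xs_less_L xs_less a_less_b by (intro g_eq_if_same_jumps_below) (auto intro: less_imp_le)
  ultimately show ?thesis unfolding sums_def g_xs by simp
qed

lemma summable_jump: "summable jump"
  using jump_sums by (rule sums_summable)

text \<open>\<open>jump_sum h x\<close> integrates \<open>h\<close>, given by its values at the jump points, over \<open>[a, x)\<close>
  with respect to \<open>\<mu>\<^sub>g\<close>.\<close>
definition jump_sum :: "(nat \<Rightarrow> real) \<Rightarrow> real \<Rightarrow> real" where
  "jump_sum h x = (\<Sum>n. if xs n < x then jump n * h n else 0)"

lemma jump_sum_cong: "(\<And>j. xs j < x \<longleftrightarrow> xs j < y) \<Longrightarrow> jump_sum h x = jump_sum h y"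
  by (simp add: jump_sum_def)

lemma jump_sum_xs: "jump_sum h (xs n) = (\<Sum>j<n. jump j * h j)"
  unfolding jump_sum_def by (subst suminf_finite[of "{..<n}"]) auto

context
  fixes h :: "nat \<Rightarrow> real" and B :: real
  assumes h_bounded: "\<And>n. \<bar>h n\<bar> \<le> B"
begin

lemma summable_jump_sum_terms: "summable (\<lambda>n. if P n then jump n * h n else 0)"
proof (rule summable_comparison_test'[OF summable_mult2[OF summable_jump, of B]])
  show "norm (if P n then jump n * h n else 0) \<le> jump n * B" for n
    using h_bounded[of n] jump_pos[of n] by (auto simp: abs_mult intro: order_trans[OF _ mult_left_mono])
qed

lemma jump_sum_above:
  assumes "\<And>j. xs j < x"
  shows "(\<lambda>n. jump_sum h (xs n)) \<longlonglongrightarrow> jump_sum h x"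
  unfolding jump_sum_xs using summable_LIMSEQ[OF summable_jump_sum_terms[of "\<lambda>_. True"]]
  by (simp add: jump_sum_def assms)

lemma mono_jump_sum: "(\<And>n. 0 \<le> h n) \<Longrightarrow> mono (jump_sum h)"
  unfolding jump_sum_def mono_def using jump_pos
  by (auto intro!: suminf_le summable_jump_sum_terms simp: less_imp_le)

end

lemma g_eq_jump_sum:
  assumes "x \<in> {a..b}"
  shows "g x = jump_sum (\<lambda>_. 1) x"
  using xs_less_cases[of x]
proof
  assume "\<exists>n. \<forall>j. xs j < x \<longleftrightarrow> j < n"
  then obtain n where n: "\<And>j. xs j < x \<longleftrightarrow> j < n" by blast
  have "g x = g (xs n)"
    using assms xs_ge[of n] xs_less[of n] n by (intro g_eq_if_same_jumps_below) auto
  also have "\<dots> = jump_sum (\<lambda>_. 1) (xs n)"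
    by (simp add: g_xs jump_sum_xs)
  also have "\<dots> = jump_sum (\<lambda>_. 1) x"
    using n by (intro jump_sum_cong) simp
  finally show ?thesis .
next
  assume all: "\<forall>j. xs j < x"
  have "g x = g b"
    using assms a_less_b all xs_less by (intro g_eq_if_same_jumps_below) (auto intro: less_imp_le)
  then show ?thesis
    using all sums_unique[OF jump_sums] by (simp add: jump_sum_def)
qed

lemma gext_eq_jump_sum: "gext g a b x = jump_sum (\<lambda>_. 1) x"
proof -
  have "xs j < max a (min b x) \<longleftrightarrow> xs j < x" for j
    using xs_ge[of j] xs_less[of j] by linarith
  then show ?thesis
    unfolding gext_def using a_less_b by (subst g_eq_jump_sum) (auto intro: jump_sum_cong)
qed

lemma LS_measure_eq: "LS_measure g a b = point_masses jump xs"
proof -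
  have jump_nonneg: "\<And>n. 0 \<le> jump n"
    using jump_pos less_imp_le by blast
  have "interval_measure (\<lambda>x. - gext g a b (- x)) = point_masses jump (uminus \<circ> xs)"
  proof (rule interval_measure_eq_cdf_shift)
    show "finite_borel_measure (point_masses jump (uminus \<circ> xs))"
      using jump_nonneg summable_jump by (rule finite_borel_measure_point_masses)
    fix x
    have "cdf (point_masses jump (uminus \<circ> xs)) x = (\<Sum>n. jump n - (if xs n < - x then jump n * 1 else 0))"
      unfolding cdf_point_masses[OF jump_nonneg summable_jump] by (intro suminf_cong) auto
    also have "\<dots> = g b - gext g a b (- x)"
      unfolding gext_eq_jump_sum jump_sum_def sums_unique[OF jump_sums]
      by (intro suminf_diff[symmetric] summable_jump summable_jump_sum_terms[of "\<lambda>_. 1" 1]) auto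
    finally show "- gext g a b (- x) = cdf (point_masses jump (uminus \<circ> xs)) x + - g b"
      by simp
  qed
  then show ?thesis
    unfolding LS_measure_def by (simp add: distr_point_masses comp_def)
qed

declare gmono.simps(2) [simp del]

lemma gmono_Suc_eq_jump_sum:
  assumes "gmono g a b a k \<in> borel_measurable borel" and "\<And>n. \<bar>gmono g a b a k (xs n)\<bar> \<le> B"
  shows "gmono g a b a (Suc k) x =
    (if x < a then 0 else real (Suc k) * jump_sum (\<lambda>n. gmono g a b a k (xs n)) x)"
proof -
  have integral: "(LINT y:A|LS_measure g a b. gmono g a b a k y) =
      (\<Sum>n. jump n * (indicator A (xs n) * gmono g a b a k (xs n)))" if "A \<in> sets borel" for A
    unfolding LS_measure_eq using jump_pos summable_jump assms that
    by (intro set_integral_point_masses) (auto intro: less_imp_le)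
  show ?thesis
  proof (cases "x < a")
    case True
    have "indicator {x..<a} (xs n) = (0 :: real)" for n
      using xs_ge[of n] by simp
    then show ?thesis using True integral[of "{x..<a}"] by (simp add: gmono.simps(2))
  next
    case False
    have "jump n * (indicator {a..<x} (xs n) * gmono g a b a k (xs n)) =
        (if xs n < x then jump n * gmono g a b a k (xs n) else 0)" for n
      using xs_ge[of n] by simp
    then show ?thesis using False integral[of "{a..<x}"] by (simp add: gmono.simps(2) jump_sum_def)
  qed
qed

lemma abs_fact_esym_jump_le: "\<bar>fact k * esym jump k n\<bar> \<le> suminf jump ^ k"
  using esym_le_suminf[of jump k n] esym_nonneg[of jump k n] jump_pos summable_jump
  by (simp add: less_imp_le field_simps)

lemma gmono_measurable_and_at_jumps:
  "gmono g a b a k \<in> borel_measurable borel \<and> (\<forall>n. gmono g a b a k (xs n) = fact k * esym jump k n)"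
proof (induction k)
  case (Suc k)
  let ?h = "\<lambda>n. fact k * esym jump k n"
  from Suc.IH have meas: "gmono g a b a k \<in> borel_measurable borel"
    and vals: "\<And>n. gmono g a b a k (xs n) = ?h n" by auto
  have eq: "gmono g a b a (Suc k) = (\<lambda>x. if x < a then 0 else real (Suc k) * jump_sum ?h x)"
    using gmono_Suc_eq_jump_sum[OF meas, of "suminf jump ^ k"] abs_fact_esym_jump_le
    by (simp add: vals fun_eq_iff)
  have "mono (jump_sum ?h)"
    using mono_jump_sum[OF abs_fact_esym_jump_le] jump_pos summable_jump by (simp add: esym_nonneg less_imp_le)
  moreover have "0 \<le> jump_sum ?h x" for x
    unfolding jump_sum_def using jump_pos
    by (intro suminf_nonneg summable_jump_sum_terms[OF abs_fact_esym_jump_le])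
      (simp add: esym_nonneg less_imp_le)
  ultimately have "mono (gmono g a b a (Suc k))"
    unfolding eq mono_def by (auto intro: mult_left_mono)
  moreover have "gmono g a b a (Suc k) (xs n) = fact (Suc k) * esym jump (Suc k) n" for n
    using xs_ge[of n] unfolding eq by (simp add: jump_sum_xs sum_distrib_left algebra_simps)
  ultimately show ?case by (simp add: borel_measurable_mono)
qed simp

lemma gmono_at_jump: "gmono g a b a k (xs n) = fact k * esym jump k n"
  using gmono_measurable_and_at_jumps by blast

lemma gmono_Suc: "a \<le> x \<Longrightarrow> gmono g a b a (Suc k) x = real (Suc k) * jump_sum (\<lambda>n. fact k * esym jump k n) x"
  using gmono_Suc_eq_jump_sum[of k "suminf jump ^ k"] gmono_measurable_and_at_jumps[of k] abs_fact_esym_jump_le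
  by (simp add: gmono_at_jump)

lemma gmono_eq_between_jumps:
  assumes "a \<le> x" and "\<And>j. xs j < x \<longleftrightarrow> j < n"
  shows "gmono g a b a k x = fact k * esym jump k n"
proof (cases k)
  case (Suc k')
  have "gmono g a b a k x = gmono g a b a k (xs n)"
    unfolding Suc using assms xs_ge[of n] by (simp add: gmono_Suc jump_sum_cong)
  then show ?thesis by (simp add: gmono_at_jump)
qed simp

lemma gmono_tendsto_above_jumps:
  assumes "a \<le> x" and "\<And>j. xs j < x"
  shows "(\<lambda>n. fact k * esym jump k n) \<longlonglongrightarrow> gmono g a b a k x"
proof (cases k)
  case (Suc k')
  have "(\<lambda>n. gmono g a b a k (xs n)) \<longlonglongrightarrow> gmono g a b a k x"
    unfolding Suc using assms xs_ge
    by (simp add: gmono_Suc jump_sum_above[OF abs_fact_esym_jump_le] tendsto_mult_left)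
  then show ?thesis by (simp add: gmono_at_jump)
qed simp

lemma UCg_tendsto_at_jumps: "f \<in> UCg g a b \<Longrightarrow> (\<lambda>n. f (xs n)) \<longlonglongrightarrow> f b"
  using jump_sums xs_ge xs_less a_less_b
  by (intro UCg_tendsto[of f g a b]) (auto simp: sums_def g_xs less_imp_le)

lemma approximation_from_jumps:
  fixes f :: "real \<Rightarrow> 'k::real_normed_field"
  assumes f: "f \<in> UCg g a b"
    and approx: "\<And>n. norm (f (xs n) - (\<Sum>k<K. c k * of_real (esym jump k n))) \<le> e"
    and x: "x \<in> {a..b}"
  shows "norm (f x - (\<Sum>k<K. c k / fact k * of_real (gmono g a b a k x))) \<le> e"
proof -
  define p where "p y = (\<Sum>k<K. c k / fact k * of_real (gmono g a b a k y))" for y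
  have p_xs: "p (xs n) = (\<Sum>k<K. c k * of_real (esym jump k n))" for n
    unfolding p_def gmono_at_jump by simp
  from xs_less_cases[of x] have "norm (f x - p x) \<le> e"
  proof
    assume "\<exists>n. \<forall>j. xs j < x \<longleftrightarrow> j < n"
    then obtain n where n: "\<And>j. xs j < x \<longleftrightarrow> j < n" by blast
    have "f x = f (xs n)"
      using x xs_ge[of n] xs_less[of n] n
      by (intro UCg_eq_if_g_eq[OF f] g_eq_if_same_jumps_below) auto
    moreover have "p x = p (xs n)"
      using x n by (simp add: p_def gmono_eq_between_jumps gmono_at_jump)
    ultimately show ?thesis using approx p_xs by simp
  next
    assume all: "\<forall>j. xs j < x"
    have "f x = f b"
      using x all xs_less a_less_b
      by (intro UCg_eq_if_g_eq[OF f] g_eq_if_same_jumps_below) (auto intro: less_imp_le)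
    moreover have "(\<lambda>n. p (xs n)) \<longlonglongrightarrow> p x"
      unfolding p_def gmono_at_jump using x all
      by (intro tendsto_sum tendsto_mult_left tendsto_of_real gmono_tendsto_above_jumps) auto
    ultimately have "(\<lambda>n. norm (f (xs n) - p (xs n))) \<longlonglongrightarrow> norm (f x - p x)"
      using UCg_tendsto_at_jumps[OF f] by (intro tendsto_norm tendsto_diff) auto
    then show ?thesis
      using approx p_xs by (intro tendsto_upperbound[of "\<lambda>n. norm (f (xs n) - p (xs n))"]) auto
  qed
  then show ?thesis by (simp add: p_def)
qed

lemma Pg_dense: "Pg_dense g a b TYPE('k::real_normed_field)"
  unfolding Pg_dense_def
proof (intro allI impI)
  fix f :: "real \<Rightarrow> 'k" and \<epsilon> :: real
  assume f: "f \<in> UCg g a b" and "\<epsilon> > 0"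
  have "uniformly_approximable (esym jump) (\<lambda>n. f (xs n))"
    using jump_pos summable_jump UCg_tendsto_at_jumps[OF f] by (rule uniformly_approximable_esym_convergent)
  moreover have "\<epsilon> / 2 > 0" using \<open>\<epsilon> > 0\<close> by simp
  ultimately obtain K c where "\<And>n. norm (f (xs n) - (\<Sum>k<K. c k * of_real (esym jump k n))) \<le> \<epsilon> / 2"
    unfolding uniformly_approximable_def by blast
  then have "(SUP x\<in>{a..b}. norm (f x - (\<Sum>k<K. c k / fact k * of_real (gmono g a b a k x)))) \<le> \<epsilon> / 2"
    using a_less_b by (intro cSUP_least approximation_from_jumps[OF f]) auto
  moreover have "(\<lambda>x. \<Sum>k<K. c k / fact k * of_real (gmono g a b a k x)) \<in> Pg g a b"
    using a_less_b by (intro gmono_combination_in_Pg) auto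
  ultimately show "\<exists>p\<in>Pg g a b. (SUP x\<in>{a..b}. norm (f x - p x)) < \<epsilon>"
    using \<open>\<epsilon> > 0\<close> by force
qed

end

theorem mainTheorem19:
  fixes g :: "real \<Rightarrow> real" and a b :: real and xs :: "nat \<Rightarrow> real"
  assumes "derivator g a b"
    and "\<forall>x\<in>{a..b}. gC g a b x = 0"
    and "Dg g a b = range xs"
    and "xs 0 = a"
    and "\<forall>n. xs n < xs (Suc n)"
  shows "Pg_dense g a b TYPE(real) \<and> Pg_dense g a b TYPE(complex)"
proof -
  interpret pure_jump_derivator g a b xs
    using assms(1-3,5) by unfold_locales
  show ?thesis using Pg_dense Pg_dense by blast
qed

end
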